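(* Let $n,d\ge1$, $a,p\ge 0$, $s>0$, $r>0$, $K\ge 1$ integer, and let $S^c\subset\mathbb Z^d$. Consider a Hamiltonian, independent of $y$, of the form $$Q(x,w)=\sum_{\nu\in\mathbb Z^n,\ |\nu|_1\le K}\ \sum_{\alpha,\beta:\ |\alpha|+|\beta|\ge 1}e^{i\nu\cdot x}Q_{\nu,\alpha,\beta}z^\alpha\bar z^\beta,$$ in the variables $x\in\mathbb T^n_{\mathbb C}$ and $w=(z,\bar z)=(z_k,\bar z_k)_{k\in S^c}$ (so $Q$ has degree at least one in $w$ and is a trigonometric polynomial of degree $\le K$ in $x$). Write its Hamiltonian vector field as $X_Q=X_Q^{(y)}+X_Q^{(w)}$ with $$X_Q^{(y)}=\partial_xQ(x,w)\cdot\partial_y,\qquad X_Q^{(w)}=-i\,\partial_zQ(x,w)\cdot\partial_{\bar z}+i\,\partial_{\bar z}Q(x,w)\cdot\partial_z .$$ Then $$\|X_Q^{(y)}\|_{s,r}\le K\,\|X_Q^{(w)}\|_{s,r}.$$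
   Context: $\ell^{(a,p)}$ denotes the space of sequences $u=(u_k)_{k\in S^c}$ with $\|u\|_{a,p}^2=|u_0|^2+\sum_{k}|u_k|^2e^{2a|k|}|k|^{2p}<\infty$ ($|k|$ the Euclidean norm); $|\cdot|_1$ on $\mathbb Z^n$ or $\mathbb C^n$ is the $\ell^1$ norm and $|\cdot|_\infty$ the max norm. $\mathbb T^n_s=\{x\in\mathbb C^n/2\pi\mathbb Z^n:\ |\mathrm{Im}\,x|\le s\}$ and $D(s,r)=\{(x,y,w):\ x\in\mathbb T^n_s,\ |y|_1\le r^2,\ \|w\|_{a,p}\le r\}$, with $w=(z,\bar z)\in\ell^{(a,p)}\times\ell^{(a,p)}$. On $V=\mathbb C^n\times\mathbb C^n\times\ell^{(a,p)}\times\ell^{(a,p)}$ put $\|(x,y,z,\bar z)\|_{V,s,r}=\frac{|x|_\infty}{s}+\frac{|y|_1}{r^2}+\frac{\|z\|_{a,p}}{r}+\frac{\|\bar z\|_{a,p}}{r}$. For a vector field with formal expansion $X=\sum_{\nu,i,\alpha,\beta}X^{(\mathtt v)}_{\nu,i,\alpha,\beta}e^{i\nu\cdot x}y^iz^\alpha\bar z^\beta\partial_{\mathtt v}$ ($\mathtt v=x,y,z,\bar z$), its majorant is $MX=\sum|X^{(\mathtt v)}_{\nu,i,\alpha,\beta}|e^{s|\nu|_1}y^iz^\alpha\bar z^\beta\partial_{\mathtt v}$ and its norm is $\|X\|_{s,r}=\sup_{(y,z,\bar z)\in D(s,r)}\|MX\|_{V,s,r}$. *)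

theory Defs
  imports "HOL-Analysis.Analysis"
begin

text \<open>Lattice sites k in Z^d are functions 'd => int ('d a finite type, d = CARD('d));
  Fourier modes nu in Z^n are functions 'n => int ('n finite, n = CARD('n)).\<close>

type_synonym 'd site = "'d \<Rightarrow> int"
type_synonym 'd mindex = "'d site \<Rightarrow> nat"

definition knorm :: "'d::finite site \<Rightarrow> real" where
  "knorm k = sqrt (\<Sum>i\<in>UNIV. (real_of_int (k i))\<^sup>2)"

definition l1int :: "('n::finite \<Rightarrow> int) \<Rightarrow> real" where
  "l1int \<nu> = (\<Sum>j\<in>UNIV. \<bar>real_of_int (\<nu> j)\<bar>)"

definition pow0 :: "real \<Rightarrow> real \<Rightarrow> real" where
  "pow0 x e = (if x = 0 then (if e = 0 then 1 else 0) else x powr e)"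

text \<open>Weight of site k in the squared (a,p)-norm: |u_0|^2 + sum_k |u_k|^2 e^{2a|k|} |k|^{2p}.\<close>
definition lweight :: "real \<Rightarrow> real \<Rightarrow> 'd::finite site \<Rightarrow> real" where
  "lweight a p k = (if (\<forall>i. k i = 0) then 1 else 0) + exp (2 * a * knorm k) * pow0 (knorm k) (2 * p)"

definition ennsqrt :: "ennreal \<Rightarrow> ennreal" where
  "ennsqrt x = (if x = \<infinity> then \<infinity> else ennreal (sqrt (enn2real x)))"

text \<open>The (a,p)-norm of a (nonnegative) sequence indexed by S^c (value \<infinity> if not in the space).\<close>
definition lnorm :: "real \<Rightarrow> real \<Rightarrow> 'd::finite site set \<Rightarrow> ('d site \<Rightarrow> ennreal) \<Rightarrow> ennreal" where
  "lnorm a p Sc u = ennsqrt (\<Sum>\<^sub>\<infinity>k\<in>Sc. (u k)\<^sup>2 * ennreal (lweight a p k))"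

definition MI :: "'d site set \<Rightarrow> 'd mindex set" where
  "MI Sc = {\<alpha>. finite {k. \<alpha> k \<noteq> 0} \<and> {k. \<alpha> k \<noteq> 0} \<subseteq> Sc}"

definition mdeg :: "'d mindex \<Rightarrow> nat" where
  "mdeg \<alpha> = (\<Sum>k\<in>{k. \<alpha> k \<noteq> 0}. \<alpha> k)"

definition mono_abs :: "('d site \<Rightarrow> complex) \<Rightarrow> 'd mindex \<Rightarrow> real" where
  "mono_abs z \<alpha> = (\<Prod>k\<in>{k. \<alpha> k \<noteq> 0}. cmod (z k) ^ \<alpha> k)"

definition ymono_abs :: "('n::finite \<Rightarrow> complex) \<Rightarrow> ('n \<Rightarrow> nat) \<Rightarrow> real" where
  "ymono_abs y i = (\<Prod>j\<in>UNIV. cmod (y j) ^ i j)"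

text \<open>Coefficient array of one component of a vector field:
  X_{nu,i,alpha,beta} for the monomial e^{i nu.x} y^i z^alpha zbar^beta.\<close>
type_synonym ('n, 'd) coeffs = "('n \<Rightarrow> int) \<Rightarrow> ('n \<Rightarrow> nat) \<Rightarrow> 'd mindex \<Rightarrow> 'd mindex \<Rightarrow> complex"

record ('n, 'd) vfield =
  vx  :: "'n \<Rightarrow> ('n, 'd) coeffs"
  vy  :: "'n \<Rightarrow> ('n, 'd) coeffs"
  vz  :: "'d site \<Rightarrow> ('n, 'd) coeffs"
  vzb :: "'d site \<Rightarrow> ('n, 'd) coeffs"

definition maj_eval :: "real \<Rightarrow> 'd::finite site set \<Rightarrow> ('n::finite, 'd) coeffs \<Rightarrow>
    ('n \<Rightarrow> complex) \<Rightarrow> ('d site \<Rightarrow> complex) \<Rightarrow> ('d site \<Rightarrow> complex) \<Rightarrow> ennreal" where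
  "maj_eval s Sc c y z zb =
     (\<Sum>\<^sub>\<infinity>(\<nu>, i, \<alpha>, \<beta>)\<in>UNIV \<times> UNIV \<times> MI Sc \<times> MI Sc.
        ennreal (cmod (c \<nu> i \<alpha> \<beta>) * exp (s * l1int \<nu>) * ymono_abs y i * mono_abs z \<alpha> * mono_abs zb \<beta>))"

definition Dom :: "real \<Rightarrow> real \<Rightarrow> real \<Rightarrow> 'd::finite site set \<Rightarrow>
    (('n::finite \<Rightarrow> complex) \<times> ('d site \<Rightarrow> complex) \<times> ('d site \<Rightarrow> complex)) set" where
  "Dom a p r Sc = {(y, z, zb). (\<Sum>j\<in>UNIV. cmod (y j)) \<le> r\<^sup>2
      \<and> lnorm a p Sc (\<lambda>k. ennreal (cmod (z k))) \<le> ennreal r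
      \<and> lnorm a p Sc (\<lambda>k. ennreal (cmod (zb k))) \<le> ennreal r}"

definition vf_norm :: "real \<Rightarrow> real \<Rightarrow> real \<Rightarrow> real \<Rightarrow> 'd::finite site set \<Rightarrow>
    ('n::finite, 'd) vfield \<Rightarrow> ennreal" where
  "vf_norm a p s r Sc X =
     (SUP (y, z, zb)\<in>Dom a p r Sc.
        (SUP j. maj_eval s Sc (vx X j) y z zb) * ennreal (1 / s)
      + (\<Sum>j\<in>UNIV. maj_eval s Sc (vy X j) y z zb) * ennreal (1 / r\<^sup>2)
      + lnorm a p Sc (\<lambda>k. maj_eval s Sc (vz X k) y z zb) * ennreal (1 / r)
      + lnorm a p Sc (\<lambda>k. maj_eval s Sc (vzb X k) y z zb) * ennreal (1 / r))"

text \<open>For the y-independent Hamiltonian Q = sum q_{nu,alpha,beta} e^{i nu.x} z^alpha zbar^beta: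
  X_Q^(y) = d_x Q . d_y.\<close>
definition XQ_y :: "(('n::finite \<Rightarrow> int) \<Rightarrow> 'd mindex \<Rightarrow> 'd mindex \<Rightarrow> complex) \<Rightarrow> ('n, 'd) vfield" where
  "XQ_y q = \<lparr> vx = (\<lambda>j \<nu> i \<alpha> \<beta>. 0),
              vy = (\<lambda>j \<nu> i \<alpha> \<beta>. if i = (\<lambda>_. 0) then \<i> * of_int (\<nu> j) * q \<nu> \<alpha> \<beta> else 0),
              vz = (\<lambda>k \<nu> i \<alpha> \<beta>. 0),
              vzb = (\<lambda>k \<nu> i \<alpha> \<beta>. 0) \<rparr>"

text \<open>X_Q^(w) = -i d_z Q . d_zbar + i d_zbar Q . d_z.\<close>
definition XQ_w :: "(('n::finite \<Rightarrow> int) \<Rightarrow> 'd mindex \<Rightarrow> 'd mindex \<Rightarrow> complex) \<Rightarrow> ('n, 'd) vfield" where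
  "XQ_w q = \<lparr> vx = (\<lambda>j \<nu> i \<alpha> \<beta>. 0),
              vy = (\<lambda>j \<nu> i \<alpha> \<beta>. 0),
              vz = (\<lambda>k \<nu> i \<alpha> \<beta>. if i = (\<lambda>_. 0)
                      then \<i> * of_nat (\<beta> k + 1) * q \<nu> \<alpha> (\<beta>(k := \<beta> k + 1)) else 0),
              vzb = (\<lambda>k \<nu> i \<alpha> \<beta>. if i = (\<lambda>_. 0)
                      then - \<i> * of_nat (\<alpha> k + 1) * q \<nu> (\<alpha>(k := \<alpha> k + 1)) \<beta> else 0) \<rparr>"

end

theory Submission
  imports Defs
begin

text \<open>At a point of D(s, r) the majorant of X_Q^(y) is the sum of
  |nu|_1 |Q_{nu,alpha,beta}| e^{s |nu|_1} |z^alpha| |zbar^beta|, and on the support of Q we have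
  |nu|_1 \<le> K \<le> K (|alpha| + |beta|). Euler's relation for monomials turns the parts weighted by
  |alpha| and |beta| into sum_k |z_k| (M X_Q^(zbar))_k and sum_k |zbar_k| (M X_Q^(z))_k. All weights
  of the (a, p)-norm are at least 1, so Cauchy--Schwarz bounds these by r times the (a, p)-norms of
  the w-components of M X_Q; dividing by r^2 gives the claim.\<close>

section \<open>Unordered sums of extended nonnegative reals\<close>

lemma ennreal_summable_on [simp]: "(f :: 'a \<Rightarrow> ennreal) summable_on A"
  by (rule nonneg_summable_on_complete) simp

lemma infsum_mono_set_ennreal:
  fixes f :: "'a \<Rightarrow> ennreal"
  assumes "A \<subseteq> B"
  shows "infsum f A \<le> infsum f B"
  by (rule infsum_mono_neutral) (use assms in auto)

lemma infsum_ge_term_ennreal: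
  fixes f :: "'a \<Rightarrow> ennreal"
  assumes "x \<in> A"
  shows "f x \<le> infsum f A"
  using infsum_mono_set_ennreal[of "{x}" A f] assms by simp

lemma infsum_Sigma_finite_ennreal:
  fixes f :: "'a \<times> 'b \<Rightarrow> ennreal"
  assumes "finite A"
  shows "infsum f (Sigma A B) = (\<Sum>x\<in>A. infsum (\<lambda>y. f (x, y)) (B x))"
proof -
  have "(\<Sum>x\<in>A. infsum (\<lambda>y. f (x, y)) (B x)) = (\<Sum>x\<in>A. infsum f (Pair x ` B x))"
    by (subst infsum_reindex) (auto simp: o_def inj_on_def)
  also have "\<dots> = infsum f (\<Union>x\<in>A. Pair x ` B x)"
    by (rule sum_infsum) (use assms in auto)
  also have "(\<Union>x\<in>A. Pair x ` B x) = Sigma A B"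
    by auto
  finally show ?thesis ..
qed

lemma infsum_Sigma_ennreal:
  fixes f :: "'a \<times> 'b \<Rightarrow> ennreal"
  shows "infsum f (Sigma A B) = infsum (\<lambda>x. infsum (\<lambda>y. f (x, y)) (B x)) A"
proof (rule antisym)
  show "infsum f (Sigma A B) \<le> infsum (\<lambda>x. infsum (\<lambda>y. f (x, y)) (B x)) A"
  proof (rule infsum_le_finite_sums)
    fix F assume F: "finite F" "F \<subseteq> Sigma A B"
    have "sum f F \<le> infsum f (Sigma (fst ` F) B)"
      using F by (simp flip: infsum_finite) (rule infsum_mono_set_ennreal, force)
    also have "\<dots> = infsum (\<lambda>x. infsum (\<lambda>y. f (x, y)) (B x)) (fst ` F)"
      using F by (simp add: infsum_Sigma_finite_ennreal)
    also have "\<dots> \<le> infsum (\<lambda>x. infsum (\<lambda>y. f (x, y)) (B x)) A"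
      using F by (intro infsum_mono_set_ennreal) force
    finally show "sum f F \<le> infsum (\<lambda>x. infsum (\<lambda>y. f (x, y)) (B x)) A" .
  qed simp
next
  show "infsum (\<lambda>x. infsum (\<lambda>y. f (x, y)) (B x)) A \<le> infsum f (Sigma A B)"
  proof (rule infsum_le_finite_sums)
    fix F assume F: "finite F" "F \<subseteq> A"
    then show "(\<Sum>x\<in>F. infsum (\<lambda>y. f (x, y)) (B x)) \<le> infsum f (Sigma A B)"
      by (simp flip: infsum_Sigma_finite_ennreal add: infsum_mono_set_ennreal Sigma_mono)
  qed simp
qed

lemma infsum_swap_ennreal:
  fixes f :: "'a \<Rightarrow> 'b \<Rightarrow> ennreal"
  shows "infsum (\<lambda>x. infsum (f x) B) A = infsum (\<lambda>y. infsum (\<lambda>x. f x y) A) B"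
proof -
  have "infsum (\<lambda>x. infsum (f x) B) A = infsum (\<lambda>(x, y). f x y) (A \<times> B)"
    by (simp add: infsum_Sigma_ennreal)
  also have "\<dots> = infsum (\<lambda>(y, x). f x y) (B \<times> A)"
    by (rule infsum_reindex_bij_witness[of _ prod.swap prod.swap]) auto
  also have "\<dots> = infsum (\<lambda>y. infsum (\<lambda>x. f x y) A) B"
    by (simp add: infsum_Sigma_ennreal)
  finally show ?thesis .
qed

lemma infsum_sum_ennreal:
  fixes f :: "'i \<Rightarrow> 'a \<Rightarrow> ennreal"
  assumes "finite J"
  shows "infsum (\<lambda>x. \<Sum>j\<in>J. f j x) A = (\<Sum>j\<in>J. infsum (f j) A)"
  using assms by (induction J rule: finite_induct) (simp_all add: infsum_add)

lemma infsum_cmult_right_ennreal: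
  fixes f :: "'a \<Rightarrow> ennreal"
  shows "infsum (\<lambda>x. c * f x) A = c * infsum f A"
  by (simp add: nonneg_infsum_complete sum_distrib_left SUP_mult_left_ennreal)

lemma infsum_split_last_ennreal:
  fixes f :: "'a \<Rightarrow> 'b \<Rightarrow> 'c \<Rightarrow> 'e \<Rightarrow> ennreal"
  shows "(\<Sum>\<^sub>\<infinity>(\<nu>, i, \<alpha>, \<beta>)\<in>A \<times> B \<times> C \<times> D. f \<nu> i \<alpha> \<beta>) =
     (\<Sum>\<^sub>\<infinity>(\<nu>, i, \<alpha>)\<in>A \<times> B \<times> C. \<Sum>\<^sub>\<infinity>\<beta>\<in>D. f \<nu> i \<alpha> \<beta>)"
proof -
  have "(\<Sum>\<^sub>\<infinity>(\<nu>, i, \<alpha>, \<beta>)\<in>A \<times> B \<times> C \<times> D. f \<nu> i \<alpha> \<beta>) =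
      (\<Sum>\<^sub>\<infinity>((\<nu>, i, \<alpha>), \<beta>)\<in>(A \<times> B \<times> C) \<times> D. f \<nu> i \<alpha> \<beta>)"
    by (rule infsum_reindex_bij_witness[of _ "\<lambda>((\<nu>, i, \<alpha>), \<beta>). (\<nu>, i, \<alpha>, \<beta>)"
          "\<lambda>(\<nu>, i, \<alpha>, \<beta>). ((\<nu>, i, \<alpha>), \<beta>)"]) auto
  then show ?thesis
    by (simp add: infsum_Sigma_ennreal split_def)
qed

lemma infsum_swap_last_two:
  "(\<Sum>\<^sub>\<infinity>(\<nu>, i, \<alpha>, \<beta>)\<in>A \<times> B \<times> C \<times> C. f \<nu> i \<alpha> \<beta>) =
     (\<Sum>\<^sub>\<infinity>(\<nu>, i, \<alpha>, \<beta>)\<in>A \<times> B \<times> C \<times> C. f \<nu> i \<beta> \<alpha>)"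
  by (rule infsum_reindex_bij_witness[of _ "\<lambda>(\<nu>, i, \<alpha>, \<beta>). (\<nu>, i, \<beta>, \<alpha>)"
        "\<lambda>(\<nu>, i, \<alpha>, \<beta>). (\<nu>, i, \<beta>, \<alpha>)"]) auto

section \<open>Multi-indices and monomials\<close>

lemma mono_abs_nonneg: "mono_abs u \<alpha> \<ge> 0"
  unfolding mono_abs_def by (rule prod_nonneg) simp

lemma mono_abs_inc:
  assumes "finite {j. \<beta> j \<noteq> 0}"
  shows "mono_abs u (\<beta>(k := \<beta> k + 1)) = cmod (u k) * mono_abs u \<beta>"
proof -
  define F where "F = insert k {j. \<beta> j \<noteq> 0}"
  have F: "finite F" "k \<in> F"
    using assms by (auto simp: F_def)
  have "mono_abs v \<gamma> = (\<Prod>j\<in>F. cmod (v j) ^ \<gamma> j)" if "{j. \<gamma> j \<noteq> 0} \<subseteq> F" for v \<gamma>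
    unfolding mono_abs_def by (rule prod.mono_neutral_left) (use F that in auto)
  moreover have "{j. (\<beta>(k := \<beta> k + 1)) j \<noteq> 0} \<subseteq> F" "{j. \<beta> j \<noteq> 0} \<subseteq> F"
    by (auto simp: F_def)
  ultimately have "mono_abs u (\<beta>(k := \<beta> k + 1)) = cmod (u k) ^ (\<beta> k + 1) * (\<Prod>j\<in>F - {k}. cmod (u j) ^ \<beta> j)"
      "mono_abs u \<beta> = cmod (u k) ^ \<beta> k * (\<Prod>j\<in>F - {k}. cmod (u j) ^ \<beta> j)"
    using F by (simp_all add: prod.remove[of F k])
  then show ?thesis
    by (simp only: power_Suc mult_ac Suc_eq_plus1[symmetric])
qed

lemma MI_upd:
  assumes "\<beta> \<in> MI Sc" "k \<in> Sc"
  shows "\<beta>(k := m) \<in> MI Sc"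
proof -
  have "{j. (\<beta>(k := m)) j \<noteq> 0} \<subseteq> insert k {j. \<beta> j \<noteq> 0}"
    by auto
  moreover have "finite (insert k {j. \<beta> j \<noteq> 0})"
    using assms by (simp add: MI_def)
  ultimately have "finite {j. (\<beta>(k := m)) j \<noteq> 0}"
    by (rule finite_subset)
  with assms show ?thesis
    by (auto simp: MI_def)
qed

text \<open>Euler's relation sum_k z_k d/dz_k z^beta = |beta| z^beta, with the monomial absorbed into g.\<close>
lemma infsum_shift_eq_infsum_mdeg:
  fixes g :: "'d mindex \<Rightarrow> ennreal"
  shows "(\<Sum>\<^sub>\<infinity>k\<in>Sc. \<Sum>\<^sub>\<infinity>\<beta>\<in>MI Sc. of_nat (\<beta> k + 1) * g (\<beta>(k := \<beta> k + 1)))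
       = (\<Sum>\<^sub>\<infinity>\<beta>\<in>MI Sc. of_nat (mdeg \<beta>) * g \<beta>)"
proof -
  have "(\<Sum>\<^sub>\<infinity>k\<in>Sc. \<Sum>\<^sub>\<infinity>\<beta>\<in>MI Sc. of_nat (\<beta> k + 1) * g (\<beta>(k := \<beta> k + 1)))
      = (\<Sum>\<^sub>\<infinity>(k, \<beta>)\<in>Sc \<times> MI Sc. of_nat (\<beta> k + 1) * g (\<beta>(k := \<beta> k + 1)))"
    by (simp add: infsum_Sigma_ennreal)
  also have "\<dots> = (\<Sum>\<^sub>\<infinity>(k, \<beta>)\<in>Sigma Sc (\<lambda>k. {\<beta> \<in> MI Sc. \<beta> k \<noteq> 0}). of_nat (\<beta> k) * g \<beta>)"
    by (rule infsum_reindex_bij_witness[of _ "\<lambda>(k, \<beta>). (k, \<beta>(k := \<beta> k - 1))"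
          "\<lambda>(k, \<beta>). (k, \<beta>(k := \<beta> k + 1))"]) (auto intro: MI_upd)
  also have "\<dots> = (\<Sum>\<^sub>\<infinity>(\<beta>, k)\<in>Sigma (MI Sc) (\<lambda>\<beta>. {k \<in> Sc. \<beta> k \<noteq> 0}). of_nat (\<beta> k) * g \<beta>)"
    by (rule infsum_reindex_bij_witness[of _ prod.swap prod.swap]) auto
  also have "\<dots> = (\<Sum>\<^sub>\<infinity>\<beta>\<in>MI Sc. \<Sum>\<^sub>\<infinity>k\<in>{k \<in> Sc. \<beta> k \<noteq> 0}. of_nat (\<beta> k) * g \<beta>)"
    by (simp add: infsum_Sigma_ennreal)
  also have "\<dots> = (\<Sum>\<^sub>\<infinity>\<beta>\<in>MI Sc. of_nat (mdeg \<beta>) * g \<beta>)"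
  proof (rule infsum_cong)
    fix \<beta> assume "\<beta> \<in> MI Sc"
    then have "{k \<in> Sc. \<beta> k \<noteq> 0} = {k. \<beta> k \<noteq> 0}" "finite {k. \<beta> k \<noteq> 0}"
      by (auto simp: MI_def)
    then show "(\<Sum>\<^sub>\<infinity>k\<in>{k \<in> Sc. \<beta> k \<noteq> 0}. of_nat (\<beta> k) * g \<beta>) = of_nat (mdeg \<beta>) * g \<beta>"
      by (simp add: mdeg_def sum_distrib_right)
  qed
  finally show ?thesis .
qed

section \<open>A weighted Cauchy--Schwarz inequality\<close>

lemma lweight_ge_1:
  assumes "a \<ge> 0" "p \<ge> 0"
  shows "1 \<le> lweight a p k"
proof (cases "\<forall>i. k i = 0")
  case True
  then show ?thesis
    by (simp add: lweight_def knorm_def pow0_def)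
next
  case False
  then obtain i where "k i \<noteq> 0"
    by auto
  then have "1 \<le> \<bar>real_of_int (k i)\<bar>"
    by linarith
  then have "1 \<le> (real_of_int (k i))\<^sup>2"
    by (metis one_le_power power2_abs)
  also have "\<dots> \<le> (\<Sum>j\<in>UNIV. (real_of_int (k j))\<^sup>2)"
    by (rule member_le_sum) auto
  finally have "1 \<le> knorm k"
    by (simp add: knorm_def)
  then have "1 \<le> exp (2 * a * knorm k)" "1 \<le> pow0 (knorm k) (2 * p)"
    using assms by (simp_all add: pow0_def ge_one_powr_ge_zero)
  then have "1 * 1 \<le> exp (2 * a * knorm k) * pow0 (knorm k) (2 * p)"
    by (intro mult_mono) simp_all
  then show ?thesis
    using False by (simp add: lweight_def)
qed

lemma ennsqrt_square [simp]: "(ennsqrt x)\<^sup>2 = x"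
  by (cases x) (simp_all add: ennsqrt_def ennreal_power)

lemma ennreal_mult_le_amgm:
  fixes x y :: ennreal
  assumes "t > 0"
  shows "x * y \<le> ennreal (t / 2) * x\<^sup>2 + ennreal (1 / (2 * t)) * y\<^sup>2"
proof (cases "x = \<infinity> \<or> y = \<infinity>")
  case True
  then have "ennreal (t / 2) * x\<^sup>2 + ennreal (1 / (2 * t)) * y\<^sup>2 = \<infinity>"
    using assms by (auto simp: ennreal_mult_eq_top_iff power_eq_top_ennreal)
  then show ?thesis
    by (metis top_greatest infinity_ennreal_def)
next
  case False
  then obtain x' y' where xy: "x = ennreal x'" "y = ennreal y'" "0 \<le> x'" "0 \<le> y'"
    by (metis ennreal_cases infinity_ennreal_def)
  have "t / 2 * x'\<^sup>2 + 1 / (2 * t) * y'\<^sup>2 - x' * y' = (t * x' - y')\<^sup>2 / (2 * t)"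
    using assms by (simp add: field_simps power2_eq_square)
  moreover have "0 \<le> (t * x' - y')\<^sup>2 / (2 * t)"
    using assms by simp
  ultimately have "ennreal (x' * y') \<le> ennreal (t / 2 * x'\<^sup>2 + 1 / (2 * t) * y'\<^sup>2)"
    by (intro ennreal_leI) linarith
  then show ?thesis
    using xy assms by (simp add: ennreal_power ennreal_mult[symmetric] ennreal_plus[symmetric] del: ennreal_plus)
qed

lemma infsum_mult_le_lnorm_mult:
  fixes u v :: "'d::finite site \<Rightarrow> ennreal"
  assumes "a \<ge> 0" "p \<ge> 0"
  shows "(\<Sum>\<^sub>\<infinity>k\<in>Sc. u k * v k) \<le> lnorm a p Sc u * lnorm a p Sc v"
proof -
  have w: "1 \<le> lweight a p k" for k :: "'d site"
    by (rule lweight_ge_1[OF assms])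
  have sq: "(lnorm a p Sc f)\<^sup>2 = (\<Sum>\<^sub>\<infinity>k\<in>Sc. (f k)\<^sup>2 * ennreal (lweight a p k))" for f
    by (simp add: lnorm_def)
  have vanish: "f k = 0" if "lnorm a p Sc f = 0" "k \<in> Sc" for f k
  proof -
    have "(f k)\<^sup>2 * ennreal (lweight a p k) \<le> (lnorm a p Sc f)\<^sup>2"
      unfolding sq using \<open>k \<in> Sc\<close> by (rule infsum_ge_term_ennreal)
    then show ?thesis
      using that w[of k] by simp
  qed
  consider "lnorm a p Sc u = 0 \<or> lnorm a p Sc v = 0"
    | "lnorm a p Sc u * lnorm a p Sc v = \<infinity>"
    | A B where "lnorm a p Sc u = ennreal A" "lnorm a p Sc v = ennreal B" "A > 0" "B > 0"
    by (cases "lnorm a p Sc u"; cases "lnorm a p Sc v") (auto simp: ennreal_mult_top ennreal_top_mult less_eq_real_def)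
  then show ?thesis
  proof cases
    case 1
    then have "(\<Sum>\<^sub>\<infinity>k\<in>Sc. u k * v k) = 0"
      by (auto simp: vanish intro: infsum_0)
    then show ?thesis
      by simp
  next
    case 2
    then show ?thesis
      by (metis top_greatest infinity_ennreal_def)
  next
    case (3 A B)
    define t where "t = B / A"
    have t: "t > 0"
      using 3 by (simp add: t_def)
    have "(\<Sum>\<^sub>\<infinity>k\<in>Sc. u k * v k) \<le> (\<Sum>\<^sub>\<infinity>k\<in>Sc. ennreal (t / 2) * ((u k)\<^sup>2 * ennreal (lweight a p k))
        + ennreal (1 / (2 * t)) * ((v k)\<^sup>2 * ennreal (lweight a p k)))"
    proof (rule infsum_mono)
      fix k :: "'d site"
      have "x \<le> x * ennreal (lweight a p k)" for x :: ennreal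
        using mult_left_mono[of 1 "ennreal (lweight a p k)" x] w[of k] by simp
      then show "u k * v k \<le> ennreal (t / 2) * ((u k)\<^sup>2 * ennreal (lweight a p k))
          + ennreal (1 / (2 * t)) * ((v k)\<^sup>2 * ennreal (lweight a p k))"
        by (intro order_trans[OF ennreal_mult_le_amgm[OF t]] add_mono mult_left_mono) simp_all
    qed simp_all
    also have "\<dots> = ennreal (t / 2) * (lnorm a p Sc u)\<^sup>2 + ennreal (1 / (2 * t)) * (lnorm a p Sc v)\<^sup>2"
      by (simp add: infsum_add infsum_cmult_right_ennreal sq)
    also have "\<dots> = ennreal (t / 2 * A\<^sup>2 + 1 / (2 * t) * B\<^sup>2)"
      using 3 t by (simp add: ennreal_power ennreal_mult[symmetric] ennreal_plus[symmetric] del: ennreal_plus)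
    also have "t / 2 * A\<^sup>2 + 1 / (2 * t) * B\<^sup>2 = A * B"
      using 3 by (simp add: t_def field_simps power2_eq_square)
    also have "ennreal (A * B) = lnorm a p Sc u * lnorm a p Sc v"
      using 3 by (simp add: ennreal_mult)
    finally show ?thesis .
  qed
qed

section \<open>Majorants of the Hamiltonian vector fields\<close>

definition maj_term :: "real \<Rightarrow> ('n::finite, 'd::finite) coeffs \<Rightarrow> ('n \<Rightarrow> complex) \<Rightarrow>
    ('d site \<Rightarrow> complex) \<Rightarrow> ('d site \<Rightarrow> complex) \<Rightarrow> ('n \<Rightarrow> int) \<Rightarrow> ('n \<Rightarrow> nat) \<Rightarrow>
    'd mindex \<Rightarrow> 'd mindex \<Rightarrow> ennreal" where
  "maj_term s c y z zb \<nu> i \<alpha> \<beta> =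
     ennreal (cmod (c \<nu> i \<alpha> \<beta>) * exp (s * l1int \<nu>) * ymono_abs y i * mono_abs z \<alpha> * mono_abs zb \<beta>)"

lemma maj_eval_eq_infsum:
  "maj_eval s Sc c y z zb =
     (\<Sum>\<^sub>\<infinity>(\<nu>, i, \<alpha>, \<beta>)\<in>UNIV \<times> UNIV \<times> MI Sc \<times> MI Sc. maj_term s c y z zb \<nu> i \<alpha> \<beta>)"
  by (simp add: maj_eval_def maj_term_def)

lemma maj_eval_conj:
  assumes "\<And>\<nu> i \<alpha> \<beta>. cmod (c' \<nu> i \<beta> \<alpha>) = cmod (c \<nu> i \<alpha> \<beta>)"
  shows "maj_eval s Sc c' y zb z = maj_eval s Sc c y z zb"
  unfolding maj_eval_eq_infsum
  by (subst infsum_swap_last_two) (auto intro: infsum_cong simp: maj_term_def assms mult_ac)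

definition ham_coeffs :: "(('n::finite \<Rightarrow> int) \<Rightarrow> 'd mindex \<Rightarrow> 'd mindex \<Rightarrow> complex) \<Rightarrow> ('n, 'd) coeffs" where
  "ham_coeffs q \<nu> i \<alpha> \<beta> = (if i = (\<lambda>_. 0) then q \<nu> \<alpha> \<beta> else 0)"

lemma maj_term_vy_XQ_y:
  "maj_term s (vy (XQ_y q) j) y z zb \<nu> i \<alpha> \<beta> =
     ennreal \<bar>real_of_int (\<nu> j)\<bar> * maj_term s (ham_coeffs q) y z zb \<nu> i \<alpha> \<beta>"
  by (simp add: maj_term_def XQ_y_def ham_coeffs_def norm_mult ennreal_mult[symmetric]
      mono_abs_nonneg ymono_abs_def prod_nonneg mult_ac)

lemma sum_maj_eval_vy_XQ_y:
  "(\<Sum>j\<in>UNIV. maj_eval s Sc (vy (XQ_y q) j) y z zb) =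
     (\<Sum>\<^sub>\<infinity>(\<nu>, i, \<alpha>, \<beta>)\<in>UNIV \<times> UNIV \<times> MI Sc \<times> MI Sc.
        ennreal (l1int \<nu>) * maj_term s (ham_coeffs q) y z zb \<nu> i \<alpha> \<beta>)"
proof -
  have l1: "(\<Sum>j\<in>UNIV. ennreal \<bar>real_of_int (\<nu> j)\<bar> * t) = ennreal (l1int \<nu>) * t" for \<nu> :: "'a \<Rightarrow> int" and t
    unfolding l1int_def sum_distrib_right[symmetric] by (subst sum_ennreal) simp_all
  show ?thesis
    unfolding maj_eval_eq_infsum maj_term_vy_XQ_y
    by (subst infsum_sum_ennreal[symmetric]) (simp_all add: split_def l1)
qed

lemma maj_term_vz_XQ_w:
  assumes "finite {j. \<beta> j \<noteq> 0}"
  shows "ennreal (cmod (zb k)) * maj_term s (vz (XQ_w q) k) y z zb \<nu> i \<alpha> \<beta> =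
     of_nat (\<beta> k + 1) * maj_term s (ham_coeffs q) y z zb \<nu> i \<alpha> (\<beta>(k := \<beta> k + 1))"
  by (simp add: maj_term_def XQ_w_def ham_coeffs_def mono_abs_inc[OF assms, simplified] norm_mult ennreal_mult[symmetric]
      ennreal_of_nat_eq_real_of_nat mono_abs_nonneg ymono_abs_def prod_nonneg mult_ac del: of_nat_Suc)

lemma infsum_maj_eval_vz_XQ_w_eq_mdeg:
  "(\<Sum>\<^sub>\<infinity>k\<in>Sc. ennreal (cmod (zb k)) * maj_eval s Sc (vz (XQ_w q) k) y z zb) =
     (\<Sum>\<^sub>\<infinity>(\<nu>, i, \<alpha>, \<beta>)\<in>UNIV \<times> UNIV \<times> MI Sc \<times> MI Sc.
        of_nat (mdeg \<beta>) * maj_term s (ham_coeffs q) y z zb \<nu> i \<alpha> \<beta>)"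
  (is "?lhs = (\<Sum>\<^sub>\<infinity>(\<nu>, i, \<alpha>, \<beta>)\<in>?I. of_nat (mdeg \<beta>) * ?T \<nu> i \<alpha> \<beta>)")
proof -
  let ?J = "UNIV \<times> UNIV \<times> MI Sc"
  have "?lhs = (\<Sum>\<^sub>\<infinity>k\<in>Sc. \<Sum>\<^sub>\<infinity>(\<nu>, i, \<alpha>)\<in>?J. \<Sum>\<^sub>\<infinity>\<beta>\<in>MI Sc.
      ennreal (cmod (zb k)) * maj_term s (vz (XQ_w q) k) y z zb \<nu> i \<alpha> \<beta>)"
    unfolding maj_eval_eq_infsum infsum_split_last_ennreal
    by (simp add: infsum_cmult_right_ennreal split_def)
  also have "\<dots> = (\<Sum>\<^sub>\<infinity>k\<in>Sc. \<Sum>\<^sub>\<infinity>(\<nu>, i, \<alpha>)\<in>?J. \<Sum>\<^sub>\<infinity>\<beta>\<in>MI Sc.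
      of_nat (\<beta> k + 1) * ?T \<nu> i \<alpha> (\<beta>(k := \<beta> k + 1)))"
    by (auto intro!: infsum_cong simp: maj_term_vz_XQ_w MI_def)
  also have "\<dots> = (\<Sum>\<^sub>\<infinity>(\<nu>, i, \<alpha>)\<in>?J. \<Sum>\<^sub>\<infinity>k\<in>Sc. \<Sum>\<^sub>\<infinity>\<beta>\<in>MI Sc.
      of_nat (\<beta> k + 1) * ?T \<nu> i \<alpha> (\<beta>(k := \<beta> k + 1)))"
    by (subst infsum_swap_ennreal) (simp add: split_def)
  also have "\<dots> = (\<Sum>\<^sub>\<infinity>(\<nu>, i, \<alpha>)\<in>?J. \<Sum>\<^sub>\<infinity>\<beta>\<in>MI Sc. of_nat (mdeg \<beta>) * ?T \<nu> i \<alpha> \<beta>)"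
    using infsum_shift_eq_infsum_mdeg[where g = "?T \<nu> i \<alpha>" for \<nu> i \<alpha>] by (simp add: split_def)
  also have "\<dots> = (\<Sum>\<^sub>\<infinity>(\<nu>, i, \<alpha>, \<beta>)\<in>?I. of_nat (mdeg \<beta>) * ?T \<nu> i \<alpha> \<beta>)"
    by (rule infsum_split_last_ennreal[symmetric])
  finally show ?thesis .
qed

lemma infsum_maj_eval_vzb_XQ_w_eq_mdeg:
  "(\<Sum>\<^sub>\<infinity>k\<in>Sc. ennreal (cmod (z k)) * maj_eval s Sc (vzb (XQ_w q) k) y z zb) =
     (\<Sum>\<^sub>\<infinity>(\<nu>, i, \<alpha>, \<beta>)\<in>UNIV \<times> UNIV \<times> MI Sc \<times> MI Sc.
        of_nat (mdeg \<alpha>) * maj_term s (ham_coeffs q) y z zb \<nu> i \<alpha> \<beta>)"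
proof -
  define q' where "q' = (\<lambda>\<nu> \<beta> \<alpha>. q \<nu> \<alpha> \<beta>)"
  have "maj_eval s Sc (vzb (XQ_w q) k) y z zb = maj_eval s Sc (vz (XQ_w q') k) y zb z" for k
    by (rule maj_eval_conj[symmetric]) (simp add: XQ_w_def q'_def norm_mult)
  then have "(\<Sum>\<^sub>\<infinity>k\<in>Sc. ennreal (cmod (z k)) * maj_eval s Sc (vzb (XQ_w q) k) y z zb) =
      (\<Sum>\<^sub>\<infinity>(\<nu>, i, \<beta>, \<alpha>)\<in>UNIV \<times> UNIV \<times> MI Sc \<times> MI Sc.
        of_nat (mdeg \<alpha>) * maj_term s (ham_coeffs q') y zb z \<nu> i \<beta> \<alpha>)"
    by (simp add: infsum_maj_eval_vz_XQ_w_eq_mdeg)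
  also have "\<dots> = (\<Sum>\<^sub>\<infinity>(\<nu>, i, \<alpha>, \<beta>)\<in>UNIV \<times> UNIV \<times> MI Sc \<times> MI Sc.
        of_nat (mdeg \<alpha>) * maj_term s (ham_coeffs q) y z zb \<nu> i \<alpha> \<beta>)"
    by (subst infsum_swap_last_two) (simp add: maj_term_def ham_coeffs_def q'_def mult_ac)
  finally show ?thesis .
qed

lemma sum_maj_eval_vy_XQ_y_le:
  assumes "\<And>\<nu> \<alpha> \<beta>. q \<nu> \<alpha> \<beta> \<noteq> 0 \<Longrightarrow> l1int \<nu> \<le> real K \<and> 1 \<le> mdeg \<alpha> + mdeg \<beta>"
  shows "(\<Sum>j\<in>UNIV. maj_eval s Sc (vy (XQ_y q) j) y z zb) \<le>
     of_nat K * ((\<Sum>\<^sub>\<infinity>k\<in>Sc. ennreal (cmod (z k)) * maj_eval s Sc (vzb (XQ_w q) k) y z zb)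
       + (\<Sum>\<^sub>\<infinity>k\<in>Sc. ennreal (cmod (zb k)) * maj_eval s Sc (vz (XQ_w q) k) y z zb))"
proof -
  let ?I = "UNIV \<times> UNIV \<times> MI Sc \<times> MI Sc"
  let ?T = "maj_term s (ham_coeffs q) y z zb"
  have deg: "ennreal (l1int \<nu>) * ?T \<nu> i \<alpha> \<beta>
      \<le> of_nat K * (of_nat (mdeg \<alpha>) * ?T \<nu> i \<alpha> \<beta> + of_nat (mdeg \<beta>) * ?T \<nu> i \<alpha> \<beta>)" for \<nu> i \<alpha> \<beta>
  proof (cases "q \<nu> \<alpha> \<beta> = 0")
    case True
    then show ?thesis
      by (simp add: maj_term_def ham_coeffs_def)
  next
    case False
    with assms have "ennreal (l1int \<nu>) \<le> of_nat K"
      by (simp add: ennreal_of_nat_eq_real_of_nat ennreal_leI)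
    moreover from False assms have "of_nat 1 \<le> (of_nat (mdeg \<alpha> + mdeg \<beta>) :: ennreal)"
      by (simp only: of_nat_le_iff)
    ultimately
    have "ennreal (l1int \<nu>) * ?T \<nu> i \<alpha> \<beta> \<le> of_nat K * (of_nat (mdeg \<alpha> + mdeg \<beta>) * ?T \<nu> i \<alpha> \<beta>)"
      using mult_mono[of "ennreal (l1int \<nu>)" "of_nat K" "?T \<nu> i \<alpha> \<beta>"] mult_right_mono[of 1] by fastforce
    then show ?thesis
      by (simp add: distrib_right)
  qed
  have "(\<Sum>j\<in>UNIV. maj_eval s Sc (vy (XQ_y q) j) y z zb)
      = (\<Sum>\<^sub>\<infinity>(\<nu>, i, \<alpha>, \<beta>)\<in>?I. ennreal (l1int \<nu>) * ?T \<nu> i \<alpha> \<beta>)"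
    by (rule sum_maj_eval_vy_XQ_y)
  also have "\<dots> \<le> (\<Sum>\<^sub>\<infinity>(\<nu>, i, \<alpha>, \<beta>)\<in>?I.
      of_nat K * (of_nat (mdeg \<alpha>) * ?T \<nu> i \<alpha> \<beta> + of_nat (mdeg \<beta>) * ?T \<nu> i \<alpha> \<beta>))"
    by (rule infsum_mono) (auto simp: deg)
  also have "\<dots> = of_nat K * ((\<Sum>\<^sub>\<infinity>(\<nu>, i, \<alpha>, \<beta>)\<in>?I. of_nat (mdeg \<alpha>) * ?T \<nu> i \<alpha> \<beta>)
      + (\<Sum>\<^sub>\<infinity>(\<nu>, i, \<alpha>, \<beta>)\<in>?I. of_nat (mdeg \<beta>) * ?T \<nu> i \<alpha> \<beta>))"
    by (simp add: split_def infsum_cmult_right_ennreal infsum_add)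
  finally show ?thesis
    by (simp only: infsum_maj_eval_vzb_XQ_w_eq_mdeg infsum_maj_eval_vz_XQ_w_eq_mdeg)
qed

lemma maj_eval_zero [simp]: "maj_eval s Sc (\<lambda>\<nu> i \<alpha> \<beta>. 0) y z zb = 0"
  unfolding maj_eval_def by (rule infsum_0) auto

lemma lnorm_zero [simp]: "lnorm a p Sc (\<lambda>k. 0) = 0"
  by (simp add: lnorm_def ennsqrt_def)

lemma vf_norm_XQ_y:
  "vf_norm a p s r Sc (XQ_y q) =
     (SUP (y, z, zb)\<in>Dom a p r Sc. (\<Sum>j\<in>UNIV. maj_eval s Sc (vy (XQ_y q) j) y z zb) * ennreal (1 / r\<^sup>2))"
  by (simp add: vf_norm_def XQ_y_def)

lemma vf_norm_XQ_w:
  "vf_norm a p s r Sc (XQ_w q) =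
     (SUP (y, z, zb)\<in>Dom a p r Sc. lnorm a p Sc (\<lambda>k. maj_eval s Sc (vz (XQ_w q) k) y z zb) * ennreal (1 / r)
        + lnorm a p Sc (\<lambda>k. maj_eval s Sc (vzb (XQ_w q) k) y z zb) * ennreal (1 / r))"
  by (simp add: vf_norm_def XQ_w_def add.assoc)

lemma XQ_y_term_le_XQ_w_term:
  assumes "a \<ge> 0" "p \<ge> 0" "r > 0"
    and "\<And>\<nu> \<alpha> \<beta>. q \<nu> \<alpha> \<beta> \<noteq> 0 \<Longrightarrow> l1int \<nu> \<le> real K \<and> 1 \<le> mdeg \<alpha> + mdeg \<beta>"
    and "(y, z, zb) \<in> Dom a p r Sc"
  shows "(\<Sum>j\<in>UNIV. maj_eval s Sc (vy (XQ_y q) j) y z zb) * ennreal (1 / r\<^sup>2)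
      \<le> of_nat K * (lnorm a p Sc (\<lambda>k. maj_eval s Sc (vz (XQ_w q) k) y z zb) * ennreal (1 / r)
        + lnorm a p Sc (\<lambda>k. maj_eval s Sc (vzb (XQ_w q) k) y z zb) * ennreal (1 / r))"
proof -
  let ?V = "lnorm a p Sc (\<lambda>k. maj_eval s Sc (vz (XQ_w q) k) y z zb)"
  let ?W = "lnorm a p Sc (\<lambda>k. maj_eval s Sc (vzb (XQ_w q) k) y z zb)"
  have "(\<Sum>\<^sub>\<infinity>k\<in>Sc. ennreal (cmod (z k)) * maj_eval s Sc (vzb (XQ_w q) k) y z zb) \<le> ennreal r * ?W"
    "(\<Sum>\<^sub>\<infinity>k\<in>Sc. ennreal (cmod (zb k)) * maj_eval s Sc (vz (XQ_w q) k) y z zb) \<le> ennreal r * ?V"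
    using assms(5) by (auto simp: Dom_def intro!: order_trans[OF infsum_mult_le_lnorm_mult[OF assms(1,2)]] mult_right_mono)
  then have "of_nat K * ((\<Sum>\<^sub>\<infinity>k\<in>Sc. ennreal (cmod (z k)) * maj_eval s Sc (vzb (XQ_w q) k) y z zb)
      + (\<Sum>\<^sub>\<infinity>k\<in>Sc. ennreal (cmod (zb k)) * maj_eval s Sc (vz (XQ_w q) k) y z zb))
      \<le> of_nat K * (ennreal r * ?W + ennreal r * ?V)"
    by (intro mult_left_mono add_mono) auto
  then have "(\<Sum>j\<in>UNIV. maj_eval s Sc (vy (XQ_y q) j) y z zb) \<le> of_nat K * (ennreal r * ?W + ennreal r * ?V)"
    using assms(4) by (blast intro: order_trans[OF sum_maj_eval_vy_XQ_y_le])
  then have "(\<Sum>j\<in>UNIV. maj_eval s Sc (vy (XQ_y q) j) y z zb) * ennreal (1 / r\<^sup>2)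
      \<le> of_nat K * (ennreal r * ?W + ennreal r * ?V) * ennreal (1 / r\<^sup>2)"
    by (rule mult_right_mono) simp
  also have "\<dots> = of_nat K * (?V * (ennreal r * ennreal (1 / r\<^sup>2)) + ?W * (ennreal r * ennreal (1 / r\<^sup>2)))"
    by (simp add: algebra_simps)
  also have "ennreal r * ennreal (1 / r\<^sup>2) = ennreal (1 / r)"
    using assms(3) by (simp add: ennreal_mult[symmetric] power2_eq_square)
  finally show ?thesis .
qed

theorem lemmaA6:
  fixes Sc :: "('d::finite \<Rightarrow> int) set"
    and q :: "('n::finite \<Rightarrow> int) \<Rightarrow> (('d \<Rightarrow> int) \<Rightarrow> nat) \<Rightarrow> (('d \<Rightarrow> int) \<Rightarrow> nat) \<Rightarrow> complex"
    and a p s r :: real and K :: nat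
  assumes "a \<ge> 0" "p \<ge> 0" "s > 0" "r > 0" "K \<ge> 1"
    and "\<And>\<nu> \<alpha> \<beta>. q \<nu> \<alpha> \<beta> \<noteq> 0 \<Longrightarrow>
           l1int \<nu> \<le> real K \<and> \<alpha> \<in> MI Sc \<and> \<beta> \<in> MI Sc \<and> mdeg \<alpha> + mdeg \<beta> \<ge> 1"
  shows "vf_norm a p s r Sc (XQ_y q) \<le> of_nat K * vf_norm a p s r Sc (XQ_w q)"
proof -
  have "(\<Sum>j\<in>UNIV. maj_eval s Sc (vy (XQ_y q) j) y z zb) * ennreal (1 / r\<^sup>2)
      \<le> of_nat K * (lnorm a p Sc (\<lambda>k. maj_eval s Sc (vz (XQ_w q) k) y z zb) * ennreal (1 / r)
        + lnorm a p Sc (\<lambda>k. maj_eval s Sc (vzb (XQ_w q) k) y z zb) * ennreal (1 / r))"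
    if "(y, z, zb) \<in> Dom a p r Sc" for y z zb
    using assms(1,2,4,6) that by (intro XQ_y_term_le_XQ_w_term) auto
  then show ?thesis
    unfolding vf_norm_XQ_y vf_norm_XQ_w SUP_mult_left_ennreal
    by (intro SUP_subset_mono) (auto simp: split_paired_all)
qed

end
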